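(* Let $n\geq 2$ be an integer and $\zeta\in\mathbb{R}$. For $(x,y_{1},\ldots,y_{n})\in\mathbb{R}^{n+1}$ write $P(\zeta)=x+\zeta y_{1}+\cdots+\zeta^{n}y_{n}$ and $P^{\prime}(\zeta)=y_{1}+2\zeta y_{2}+\cdots+n\zeta^{n-1}y_{n}$. For real $Q>1$ and $R>0$ define \begin{align*} \chi_{A}(Q)&:=\{(x,y_{1},\ldots,y_{n})\in\mathbb{R}^{n+1}: \vert P(\zeta)\vert\leq Q^{-1}\},\\ \chi_{B}(R)&:=\{(x,y_{1},\ldots,y_{n})\in\mathbb{R}^{n+1}: \vert P^{\prime}(\zeta)\vert\leq R\},\\ \chi_{C}(Q)&:=\{(x,y_{1},\ldots,y_{n})\in\mathbb{R}^{n+1}: \vert y_{t}\vert\leq Q^{1/n},\ 1\leq t\leq n\}. \end{align*} Then there is a constant $E=E(n,\zeta)$ independent of $Q$ and $R$ such that for all sufficiently large $Q$ and all $R>0$, \[ \mathrm{vol}\left(\chi_{A}(Q)\cap\chi_{B}(R)\cap\chi_{C}(Q)\right)\leq E\,R\,Q^{-1/n}. \]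
   Context: $\mathrm{vol}$ denotes $(n+1)$-dimensional Lebesgue measure. *)

theory Defs
  imports "HOL-Analysis.Analysis"
begin

text \<open>Points of R^(n+1) are functions v on {0..n}: v 0 = x, v t = y_t (1 <= t <= n).
  (n+1)-dimensional Lebesgue measure is the product of Lebesgue measures on {0..n}.\<close>

definition vol_np1 :: "nat \<Rightarrow> (nat \<Rightarrow> real) measure" where
  "vol_np1 n = PiM {0..n} (\<lambda>_. lborel)"

definition polyP :: "nat \<Rightarrow> real \<Rightarrow> (nat \<Rightarrow> real) \<Rightarrow> real" where
  "polyP n \<zeta> v = v 0 + (\<Sum>t=1..n. \<zeta> ^ t * v t)"

definition polyP' :: "nat \<Rightarrow> real \<Rightarrow> (nat \<Rightarrow> real) \<Rightarrow> real" where
  "polyP' n \<zeta> v = (\<Sum>t=1..n. real t * \<zeta> ^ (t - 1) * v t)"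

definition chiA :: "nat \<Rightarrow> real \<Rightarrow> real \<Rightarrow> (nat \<Rightarrow> real) set" where
  "chiA n \<zeta> Q = {v \<in> PiE {0..n} (\<lambda>_. UNIV). \<bar>polyP n \<zeta> v\<bar> \<le> 1 / Q}"

definition chiB :: "nat \<Rightarrow> real \<Rightarrow> real \<Rightarrow> (nat \<Rightarrow> real) set" where
  "chiB n \<zeta> R = {v \<in> PiE {0..n} (\<lambda>_. UNIV). \<bar>polyP' n \<zeta> v\<bar> \<le> R}"

definition chiC :: "nat \<Rightarrow> real \<Rightarrow> (nat \<Rightarrow> real) set" where
  "chiC n Q = {v \<in> PiE {0..n} (\<lambda>_. UNIV). \<forall>t\<in>{1..n}. \<bar>v t\<bar> \<le> Q powr (1 / real n)}"

end

theory Submission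
  imports Defs
begin

text \<open>Integrate out x first: for fixed y, the condition |P(\<zeta>)| \<le> 1/Q confines x to an
  interval of length 2/Q. Since the coefficient of y_1 in P'(\<zeta>) is 1, for fixed
  y_2, ..., y_n the condition |P'(\<zeta>)| \<le> R confines y_1 to an interval of length 2R.
  The remaining n - 1 coordinates range over a cube of side 2 Q^(1/n), giving the bound
  2/Q * 2R * (2 Q^(1/n))^(n-1) = 2^(n+1) R Q^(-1/n).\<close>

lemma product_sigma_finite_lborel: "product_sigma_finite (\<lambda>_::'i. lborel::real measure)"
  by (simp add: product_sigma_finite_def lborel.sigma_finite_measure_axioms)

lemma emeasure_PiM_insert_le_slice_interval:
  fixes S :: "('i \<Rightarrow> real) set" and a :: "('i \<Rightarrow> real) \<Rightarrow> real"
  assumes "finite I" "i \<notin> I" "r \<ge> 0"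
    and S: "S \<in> sets (PiM (insert i I) (\<lambda>_. lborel))"
    and T: "T \<in> sets (PiM I (\<lambda>_. lborel))"
    and slice: "\<And>x y. x \<in> space (PiM I (\<lambda>_. lborel)) \<Longrightarrow> x(i := y) \<in> S \<Longrightarrow>
                  x \<in> T \<and> y \<in> {a x - r .. a x + r}"
  shows "emeasure (PiM (insert i I) (\<lambda>_. lborel)) S \<le> ennreal (2 * r) * emeasure (PiM I (\<lambda>_. lborel)) T"
proof -
  interpret product_sigma_finite "\<lambda>_::'i. lborel::real measure"
    by (rule product_sigma_finite_lborel)
  have "emeasure (PiM (insert i I) (\<lambda>_. lborel)) S
      = (\<integral>\<^sup>+ v. indicator S v \<partial>PiM (insert i I) (\<lambda>_. lborel))"
    using S by simp
  also have "\<dots> = (\<integral>\<^sup>+ x. (\<integral>\<^sup>+ y. indicator S (x(i := y)) \<partial>lborel) \<partial>PiM I (\<lambda>_. lborel))"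
    by (rule product_nn_integral_insert) (use assms in auto)
  also have "\<dots> \<le> (\<integral>\<^sup>+ x. ennreal (2 * r) * indicator T x \<partial>PiM I (\<lambda>_. lborel))"
  proof (rule nn_integral_mono)
    fix x assume x: "x \<in> space (PiM I (\<lambda>_::'i. lborel::real measure))"
    have "(\<integral>\<^sup>+ y. indicator S (x(i := y)) \<partial>lborel)
        \<le> (\<integral>\<^sup>+ y. indicator T x * indicator {a x - r .. a x + r} y \<partial>lborel)"
      by (rule nn_integral_mono) (auto simp: indicator_def dest: slice[OF x])
    also have "\<dots> = indicator T x * (\<integral>\<^sup>+ y. indicator {a x - r .. a x + r} y \<partial>lborel)"
      by (rule nn_integral_cmult) simp
    also have "\<dots> = ennreal (2 * r) * indicator T x"
      using \<open>r \<ge> 0\<close> by (simp add: mult.commute)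
    finally show "(\<integral>\<^sup>+ y. indicator S (x(i := y)) \<partial>lborel) \<le> ennreal (2 * r) * indicator T x" .
  qed
  also have "\<dots> = ennreal (2 * r) * emeasure (PiM I (\<lambda>_. lborel)) T"
    by (rule nn_integral_cmult_indicator) (rule T)
  finally show ?thesis .
qed

lemma emeasure_PiM_lborel_cube:
  assumes "finite I" "c \<ge> 0"
  shows "emeasure (PiM I (\<lambda>_. lborel)) (PiE I (\<lambda>_. {-c..c})) = ennreal ((2 * c) ^ card I)"
proof -
  interpret product_sigma_finite "\<lambda>_::'i. lborel::real measure"
    by (rule product_sigma_finite_lborel)
  have "emeasure (PiM I (\<lambda>_. lborel)) (PiE I (\<lambda>_. {-c..c})) = (\<Prod>t\<in>I. emeasure lborel {-c..c})"
    by (rule emeasure_PiM) (use assms in auto)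
  also have "\<dots> = ennreal (2 * c) ^ card I"
    using assms by simp
  finally show ?thesis
    using assms by (simp add: ennreal_power)
qed

lemma emeasure_derivative_slab_cube_le:
  fixes n :: nat and \<zeta> R c :: real
  assumes n: "n \<ge> 1" and "R \<ge> 0" "c \<ge> 0"
  shows "emeasure (PiM {1..n} (\<lambda>_. lborel))
           {v \<in> space (PiM {1..n} (\<lambda>_. lborel)). \<bar>polyP' n \<zeta> v\<bar> \<le> R \<and> (\<forall>t\<in>{1..n}. \<bar>v t\<bar> \<le> c)}
         \<le> ennreal (2 * R * (2 * c) ^ (n - 1))"
proof -
  have I: "{1..n} = insert 1 {2..n}"
    using n by auto
  define b where "b x = (\<Sum>t=2..n. real t * \<zeta> ^ (t - 1) * x t)" for x :: "nat \<Rightarrow> real"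
  have P'_upd: "polyP' n \<zeta> (x(1 := y)) = y + b x" for x y
    unfolding polyP'_def b_def I by (simp add: sum.insert)
  have measurable: "{v \<in> space (PiM {1..n} (\<lambda>_. lborel)).
      \<bar>polyP' n \<zeta> v\<bar> \<le> R \<and> (\<forall>t\<in>{1..n}. \<bar>v t\<bar> \<le> c)} \<in> sets (PiM {1..n} (\<lambda>_. lborel))"
    unfolding polyP'_def by measurable
  have "emeasure (PiM {1..n} (\<lambda>_. lborel))
           {v \<in> space (PiM {1..n} (\<lambda>_. lborel)). \<bar>polyP' n \<zeta> v\<bar> \<le> R \<and> (\<forall>t\<in>{1..n}. \<bar>v t\<bar> \<le> c)}
        \<le> ennreal (2 * R) * emeasure (PiM {2..n} (\<lambda>_. lborel)) (PiE {2..n} (\<lambda>_. {-c..c}))"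
    unfolding I
  proof (rule emeasure_PiM_insert_le_slice_interval[where a = "\<lambda>x. - b x"])
    fix x y
    assume x: "x \<in> space (PiM {2..n} (\<lambda>_::nat. lborel::real measure))"
      and "x(1 := y) \<in> {v \<in> space (PiM (insert 1 {2..n}) (\<lambda>_. lborel)).
                         \<bar>polyP' n \<zeta> v\<bar> \<le> R \<and> (\<forall>t\<in>insert 1 {2..n}. \<bar>v t\<bar> \<le> c)}"
    then have "\<bar>polyP' n \<zeta> (x(1 := y))\<bar> \<le> R" "\<forall>t\<in>{2..n}. \<bar>(x(1 := y)) t\<bar> \<le> c"
      by blast+
    then have "\<bar>y + b x\<bar> \<le> R" "\<forall>t\<in>{2..n}. x t \<in> {-c..c}"
      unfolding P'_upd by (auto simp: abs_le_iff)
    with x show "x \<in> PiE {2..n} (\<lambda>_. {-c..c}) \<and> y \<in> {- b x - R .. - b x + R}"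
      by (auto simp: space_PiM PiE_iff)
  qed (simp, simp, use assms in simp, fact measurable[unfolded I], simp)
  also have "\<dots> = ennreal (2 * R * (2 * c) ^ (n - 1))"
    using assms by (simp add: emeasure_PiM_lborel_cube ennreal_mult)
  finally show ?thesis .
qed

lemma slab_bound_product_eq:
  fixes n :: nat and Q R :: real
  assumes n: "n \<ge> 1" and "Q > 0"
  shows "2 / Q * (2 * R) * (2 * Q powr (1 / real n)) ^ (n - 1) = 2 ^ (n + 1) * R * Q powr (- 1 / real n)"
proof -
  have "(Q powr (1 / real n)) ^ (n - 1) = (Q powr (1 / real n)) powr real (n - 1)"
    using assms by (subst powr_realpow) auto
  also have "\<dots> = Q powr (real (n - 1) / real n)"
    by (simp add: powr_powr)
  finally have "(Q powr (1 / real n)) ^ (n - 1) = Q powr (real (n - 1) / real n)" .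
  then have "(Q powr (1 / real n)) ^ (n - 1) / Q = Q powr (real (n - 1) / real n - 1)"
    using assms by (simp add: powr_diff)
  also have "real (n - 1) / real n - 1 = - 1 / real n"
    using n by (simp add: of_nat_diff field_simps)
  finally have powr_eq: "(Q powr (1 / real n)) ^ (n - 1) / Q = Q powr (- 1 / real n)" .
  have "(2::real) ^ (n + 1) = 2 ^ ((n - 1) + 2)"
    using n by (simp add: Suc_diff_le)
  also have "\<dots> = 4 * 2 ^ (n - 1)"
    unfolding power_add by simp
  finally have "(2::real) ^ (n + 1) = 4 * 2 ^ (n - 1)" .
  then show ?thesis
    unfolding power_mult_distrib powr_eq[symmetric] by (simp add: field_simps)
qed

lemma emeasure_chi_inter_le:
  fixes n :: nat and \<zeta> Q R :: real
  assumes n: "n \<ge> 1" and "R \<ge> 0" "Q > 0"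
  shows "emeasure (vol_np1 n) (chiA n \<zeta> Q \<inter> chiB n \<zeta> R \<inter> chiC n Q)
     \<le> ennreal (2 ^ (n + 1) * R * Q powr (- 1 / real n))"
proof -
  define c where "c = Q powr (1 / real n)"
  define S' where "S' = {v \<in> space (PiM {1..n} (\<lambda>_. lborel)).
                          \<bar>polyP' n \<zeta> v\<bar> \<le> R \<and> (\<forall>t\<in>{1..n}. \<bar>v t\<bar> \<le> c)}"
  define a where "a x = - (\<Sum>t=1..n. \<zeta> ^ t * x t)" for x :: "nat \<Rightarrow> real"
  have I: "{0..n} = insert 0 {1..n}"
    by auto
  have chi_eq: "chiA n \<zeta> Q \<inter> chiB n \<zeta> R \<inter> chiC n Q =
      {v \<in> space (PiM {0..n} (\<lambda>_. lborel)).
         \<bar>polyP n \<zeta> v\<bar> \<le> 1 / Q \<and> \<bar>polyP' n \<zeta> v\<bar> \<le> R \<and> (\<forall>t\<in>{1..n}. \<bar>v t\<bar> \<le> c)}"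
    unfolding chiA_def chiB_def chiC_def c_def by (auto simp: space_PiM)
  have chi_measurable: "{v \<in> space (PiM {0..n} (\<lambda>_. lborel)).
         \<bar>polyP n \<zeta> v\<bar> \<le> 1 / Q \<and> \<bar>polyP' n \<zeta> v\<bar> \<le> R \<and> (\<forall>t\<in>{1..n}. \<bar>v t\<bar> \<le> c)}
      \<in> sets (PiM {0..n} (\<lambda>_. lborel))"
    unfolding polyP_def polyP'_def by measurable
  have S'_measurable: "S' \<in> sets (PiM {1..n} (\<lambda>_. lborel))"
    unfolding S'_def polyP'_def by measurable
  have P_upd: "polyP n \<zeta> (x(0 := y)) = y - a x" for x y
    unfolding polyP_def a_def by simp
  have P'_upd: "polyP' n \<zeta> (x(0 := y)) = polyP' n \<zeta> x" for x y
    unfolding polyP'_def by (intro sum.cong) auto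
  have "emeasure (vol_np1 n) (chiA n \<zeta> Q \<inter> chiB n \<zeta> R \<inter> chiC n Q)
      \<le> ennreal (2 * (1 / Q)) * emeasure (PiM {1..n} (\<lambda>_. lborel)) S'"
    unfolding vol_np1_def chi_eq I
  proof (rule emeasure_PiM_insert_le_slice_interval[where a = a])
    fix x y
    assume "x \<in> space (PiM {1..n} (\<lambda>_::nat. lborel::real measure))"
      and "x(0 := y) \<in> {v \<in> space (PiM (insert 0 {1..n}) (\<lambda>_. lborel)).
               \<bar>polyP n \<zeta> v\<bar> \<le> 1 / Q \<and> \<bar>polyP' n \<zeta> v\<bar> \<le> R \<and> (\<forall>t\<in>{1..n}. \<bar>v t\<bar> \<le> c)}"
    then show "x \<in> S' \<and> y \<in> {a x - 1 / Q .. a x + 1 / Q}"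
      by (auto simp: S'_def P_upd P'_upd abs_le_iff)
  qed (simp, simp, use assms in simp, fact chi_measurable[unfolded I], fact S'_measurable)
  also have "\<dots> \<le> ennreal (2 * (1 / Q)) * ennreal (2 * R * (2 * c) ^ (n - 1))"
    unfolding S'_def
    by (intro mult_left_mono emeasure_derivative_slab_cube_le) (use assms in \<open>auto simp: c_def\<close>)
  also have "\<dots> = ennreal (2 / Q * (2 * R) * (2 * c) ^ (n - 1))"
    using assms by (simp add: ennreal_mult[symmetric] c_def mult.assoc)
  also have "\<dots> = ennreal (2 ^ (n + 1) * R * Q powr (- 1 / real n))"
    unfolding c_def using slab_bound_product_eq[OF n \<open>Q > 0\<close>] by simp
  finally show ?thesis .
qed

theorem lemma1:
  fixes n :: nat and \<zeta> :: real
  assumes "n \<ge> 2"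
  shows "\<exists>E::real. \<exists>Q0::real. \<forall>Q R. Q > 1 \<and> Q \<ge> Q0 \<and> R > 0 \<longrightarrow>
           emeasure (vol_np1 n) (chiA n \<zeta> Q \<inter> chiB n \<zeta> R \<inter> chiC n Q)
             \<le> ennreal (E * R * Q powr (- 1 / real n))"
proof -
  have "emeasure (vol_np1 n) (chiA n \<zeta> Q \<inter> chiB n \<zeta> R \<inter> chiC n Q)
          \<le> ennreal (2 ^ (n + 1) * R * Q powr (- 1 / real n))" if "Q > 1" "R > 0" for Q R
    using assms that by (intro emeasure_chi_inter_le) auto
  then show ?thesis
    by blast
qed

end
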